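(* For all $m,t\in\mathbb{N}$ with $m\geq 3$ and all integers $r$ with $2\leq r\leq \frac{m}{2+\sqrt{2}}$, \[ R_t(r,m)\leq \left(1-\frac{1}{2^t}\right)2^m-\frac{\sqrt{2^t-1}}{2^t}\left(1+\sqrt{2}\right)^{r-1}2^{\frac{m-1}{2}}+\frac{\sqrt{2^t-1}}{2^{t}\sqrt[4]{2} }\,r\binom{m}{r}. \]
   Context: For a $t\times n$ matrix $\mathbf{v}$ over $\mathbb{F}_2$ with rows $\overline{v}_1,\dots,\overline{v}_t$, $\mathrm{wt}^{(t)}(\mathbf{v})=\left|\bigcup_{i} \mathrm{supp}(\overline{v}_i)\right|$ and $d^{(t)}(\mathbf{u},\mathbf{v})=\mathrm{wt}^{(t)}(\mathbf{u}-\mathbf{v})$. For a linear code $C\subseteq\mathbb{F}_2^n$, $C^t$ is the set of $t\times n$ matrices all of whose rows lie in $C$, and $R_t(C)$ is the smallest integer $\rho$ such that for every $\mathbf{v}\in\mathbb{F}_2^{t\times n}$ some $\mathbf{c}\in C^t$ has $d^{(t)}(\mathbf{v},\mathbf{c})\le\rho$. Reed–Muller codes $\mathrm{RM}(r,m)\subseteq\mathbb{F}_2^{2^m}$: $\mathrm{RM}(0,m)=\{\overline{0},\overline{1}\}$, $\mathrm{RM}(m,m)=\mathbb{F}_2^{2^m}$, and for $1\leq r\leq m-1$, $\mathrm{RM}(r,m)=\{(\overline{u},\overline{u}+\overline{v}) : \overline{u}\in \mathrm{RM}(r,m-1),\ \overline{v}\in\mathrm{RM}(r-1,m-1)\}$.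 $R_t(r,m)=R_t(\mathrm{RM}(r,m))$. *)

theory Defs
  imports Complex_Main
begin

text \<open>Binary vectors in F_2^n are bool lists of length n (True = 1); addition is xor.\<close>

definition vadd :: "bool list \<Rightarrow> bool list \<Rightarrow> bool list" where
  "vadd u v = map2 (\<noteq>) u v"

fun RM :: "nat \<Rightarrow> nat \<Rightarrow> bool list set" where
  "RM 0 m = {replicate (2^m) False, replicate (2^m) True}"
| "RM (Suc r) 0 = {v. length v = 1}"
| "RM (Suc r) (Suc m) =
     (if Suc r \<ge> Suc m then {v. length v = 2^(Suc m)}
      else {u @ vadd u v | u v. u \<in> RM (Suc r) m \<and> v \<in> RM r m})"

text \<open>A t x n matrix is a function from row indices i < t to rows (bool lists of length n).\<close>
definition is_mat :: "nat \<Rightarrow> nat \<Rightarrow> (nat \<Rightarrow> bool list) \<Rightarrow> bool" where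
  "is_mat t n v \<longleftrightarrow> (\<forall>i<t. length (v i) = n)"

definition wt_t :: "nat \<Rightarrow> nat \<Rightarrow> (nat \<Rightarrow> bool list) \<Rightarrow> nat" where
  "wt_t t n v = card {j. j < n \<and> (\<exists>i<t. v i ! j)}"

definition dist_t :: "nat \<Rightarrow> nat \<Rightarrow> (nat \<Rightarrow> bool list) \<Rightarrow> (nat \<Rightarrow> bool list) \<Rightarrow> nat" where
  "dist_t t n u v = wt_t t n (\<lambda>i. vadd (u i) (v i))"

definition cov_rad_t :: "nat \<Rightarrow> nat \<Rightarrow> bool list set \<Rightarrow> nat" where
  "cov_rad_t t n C = (LEAST \<rho>. \<forall>v. is_mat t n v \<longrightarrow>
      (\<exists>c. (\<forall>i<t. c i \<in> C) \<and> dist_t t n v c \<le> \<rho>))"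

definition R_RM :: "nat \<Rightarrow> nat \<Rightarrow> nat \<Rightarrow> nat" where
  "R_RM t r m = cov_rad_t t (2^m) (RM r m)"

end

theory Submission
  imports Defs
begin

text \<open>
  Call A a guaranteed agreement for C if every t x n binary matrix agrees with some matrix with
  rows in C in at least A columns; then the covering radius R_t(C) is at most n - A.

  For RM(1, m) the rows are chosen one after the other. If the first k rows agree with
  codewords on a set S of columns, Parseval's identity for the Walsh characters provides a
  first-order codeword agreeing with the next row on at least (|S| + sqrt |S|) / 2 columns of S.
  Iterating this from |S| = 2^m gives the agreement 2^m / 2^t + sqrt (2^(m-1)) sqrt (2^t - 1) / 2^t.

  The (u | u + v) construction makes guaranteed agreements add up, so that
  A(r, m + 1) >= A(r, m) + A(r - 1, m). This Pascal-type recursion is solved by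
  2^m / 2^t + sqrt (2^t - 1) / 2^t ((1 + sqrt 2)^(r-1) sqrt (2^(m-1)) - D(r, m)), where the
  defect D(r, m) = sum over 2 <= j <= r of C(m - j, r - j) (2 + sqrt 2)^(j-1) pays for the
  diagonal r = m, on which only the trivial agreement 2^m is available.
  Finally D(r, m) <= r C(m, r) / 2^(1/4) as soon as r (2 + sqrt 2) <= m.
\<close>

section \<open>The Plotkin construction and Reed--Muller codes\<close>

lemma length_vadd [simp]: "length (vadd u v) = min (length u) (length v)"
  by (simp add: vadd_def)

lemma nth_vadd [simp]: "j < length u \<Longrightarrow> j < length v \<Longrightarrow> vadd u v ! j = (u ! j \<noteq> v ! j)"
  by (simp add: vadd_def)

lemma vadd_append:
  "length u = length x \<Longrightarrow> vadd (u @ w) (x @ y) = vadd u x @ vadd w y"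
  by (simp add: vadd_def)

lemma vadd_swap:
  assumes "length v = length u" and "length w = length u"
  shows "vadd (vadd u v) w = vadd (vadd u w) v"
  using assms by (intro nth_equalityI) auto

definition plotkin :: "bool list set \<Rightarrow> bool list set \<Rightarrow> bool list set" where
  "plotkin U V = (\<lambda>(u, v). u @ vadd u v) ` (U \<times> V)"

lemma inj_on_plotkin:
  assumes "\<And>u. u \<in> U \<Longrightarrow> length u = n" and "\<And>v. v \<in> V \<Longrightarrow> length v = n"
  shows "inj_on (\<lambda>(u, v). u @ vadd u v) (U \<times> V)"
proof (rule inj_onI, clarify)
  fix u v u' v'
  assume in_UV: "u \<in> U" "v \<in> V" "u' \<in> U" "v' \<in> V" and eq: "u @ vadd u v = u' @ vadd u' v'"
  then have "u = u'" using assms by simp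
  with eq have same: "vadd u v ! j = vadd u v' ! j" for j
    by simp
  have len: "length u = n" "length v = n" "length v' = n"
    using assms in_UV by auto
  have "v = v'"
  proof (rule nth_equalityI)
    fix j assume "j < length v"
    then show "v ! j = v' ! j" using same[of j] len by auto
  qed (simp add: len)
  with \<open>u = u'\<close> show "u = u' \<and> v = v'" ..
qed

lemma card_plotkin:
  assumes "\<And>u. u \<in> U \<Longrightarrow> length u = n" and "\<And>v. v \<in> V \<Longrightarrow> length v = n"
  shows "card (plotkin U V) = card U * card V"
  unfolding plotkin_def by (simp add: card_image[OF inj_on_plotkin[OF assms]] card_cartesian_product)

lemma length_RM: "c \<in> RM r m \<Longrightarrow> length c = 2 ^ m"
  by (induction r m arbitrary: c rule: RM.induct) (auto split: if_splits)

lemma finite_RM: "finite (RM r m)"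
proof (rule finite_subset)
  show "RM r m \<subseteq> {xs. set xs \<subseteq> UNIV \<and> length xs = 2 ^ m}"
    using length_RM by auto
qed (rule finite_lists_length_eq, simp)

lemma RM_full: "1 \<le> r \<Longrightarrow> m \<le> r \<Longrightarrow> RM r m = {v. length v = 2 ^ m}"
  by (cases r) (simp_all, cases m, auto)

lemma RM_plotkin: "1 \<le> r \<Longrightarrow> r < m \<Longrightarrow> RM r m = plotkin (RM r (m - 1)) (RM (r - 1) (m - 1))"
  by (cases r; cases m) (auto simp: plotkin_def)

lemma RM1_0: "RM 1 0 = {[False], [True]}"
proof -
  have "v = [False] \<or> v = [True]" if "length v = 1" for v :: "bool list"
    using that by (cases v) auto
  then show ?thesis by auto
qed

lemma RM1_Suc: "RM 1 (Suc m) = plotkin (RM 1 m) (RM 0 m)"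
proof (cases m)
  case 0
  have "c \<in> plotkin (RM 1 0) (RM 0 0)" if len: "length c = 2" for c
  proof -
    obtain x y where c: "c = [x, y]"
      using len by (cases c; cases "tl c") (auto simp: numeral_2_eq_2)
    have "([x], [x \<noteq> y]) \<in> RM 1 0 \<times> RM 0 0" by (cases "x = y") auto
    moreover have "c = [x] @ vadd [x] [x \<noteq> y]" using c by (auto simp: vadd_def)
    ultimately show ?thesis
      unfolding plotkin_def by (intro image_eqI[where x = "([x], [x \<noteq> y])"]) simp_all
  qed
  moreover have "plotkin (RM 1 0) (RM 0 0) \<subseteq> RM 1 1"
    by (auto simp: plotkin_def)
  ultimately show ?thesis using 0 by auto
next
  case (Suc k)
  then show ?thesis using RM_plotkin[of 1 "Suc m"] by simp
qed

text \<open>Since simp rewrites 1 to Suc 0, it would otherwise unfold RM 1 (Suc m) by its defining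
  equation instead of using RM1_Suc.\<close>

declare RM.simps(2, 3) [simp del]

lemma card_RM1: "card (RM 1 m) = 2 ^ (m + 1)"
proof (induction m)
  case 0
  show ?case by (simp only: RM1_0) simp
next
  case (Suc m)
  have "replicate (2 ^ m) False \<noteq> replicate (2 ^ m) True"
    by (simp add: replicate_eq_replicate)
  then have "card (RM 0 m) = 2" by simp
  moreover have "card (RM 1 (Suc m)) = card (RM 1 m) * card (RM 0 m)"
    unfolding RM1_Suc by (rule card_plotkin[where n = "2 ^ m"]; erule length_RM)
  ultimately show ?case using Suc.IH by simp
qed

lemma sum_plotkin:
  assumes "\<And>u. u \<in> U \<Longrightarrow> length u = n" and "\<And>v. v \<in> V \<Longrightarrow> length v = n"
  shows "(\<Sum>c\<in>plotkin U V. f c) = (\<Sum>u\<in>U. \<Sum>v\<in>V. f (u @ vadd u v))"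
  unfolding plotkin_def
  by (simp add: sum.reindex[OF inj_on_plotkin[OF assms]] sum.cartesian_product')

section \<open>Correlation with first-order Reed--Muller codewords\<close>

lemma sum_lessThan_add:
  fixes f :: "nat \<Rightarrow> 'a::comm_monoid_add"
  shows "(\<Sum>j<n + k. f j) = (\<Sum>j<n. f j) + (\<Sum>j<k. f (j + n))"
  by (induction k) (simp_all add: ac_simps)

definition bit_sign :: "bool \<Rightarrow> real" where
  "bit_sign b = (if b then -1 else 1)"

definition correlation :: "nat \<Rightarrow> (nat \<Rightarrow> real) \<Rightarrow> bool list \<Rightarrow> real" where
  "correlation n h c = (\<Sum>j<n. h j * bit_sign (c ! j))"

lemma correlation_append:
  "length u = n \<Longrightarrow> correlation (n + n) h (u @ x) = correlation n h u + correlation n (\<lambda>j. h (j + n)) x"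
  by (simp add: correlation_def sum_lessThan_add nth_append)

lemma correlation_vadd_replicate:
  "length u = n \<Longrightarrow> correlation n h (vadd u (replicate n b)) = bit_sign b * correlation n h u"
  unfolding correlation_def sum_distrib_left by (rule sum.cong) (auto simp: bit_sign_def)

text \<open>Parseval's identity: up to sign, the codewords of RM(1, m) are the Walsh characters.\<close>

lemma sum_correlation_sq_RM1:
  "(\<Sum>c\<in>RM 1 m. (correlation (2 ^ m) h c)\<^sup>2) = 2 ^ (m + 1) * (\<Sum>j<2 ^ m. (h j)\<^sup>2)"
proof (induction m arbitrary: h)
  case 0
  show ?case by (simp only: RM1_0) (simp add: correlation_def bit_sign_def)
next
  case (Suc m)
  let ?n = "2 ^ m :: nat"
  let ?h' = "\<lambda>j. h (j + ?n)"
  have distinct: "replicate ?n False \<noteq> replicate ?n True"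
    by simp
  have split: "(\<Sum>v\<in>RM 0 m. (correlation (?n + ?n) h (u @ vadd u v))\<^sup>2)
      = 2 * (correlation ?n h u)\<^sup>2 + 2 * (correlation ?n ?h' u)\<^sup>2" if "u \<in> RM 1 m" for u
    \<comment> \<open>parallelogram law\<close>
    using that distinct
    by (simp add: length_RM correlation_append correlation_vadd_replicate bit_sign_def power2_eq_square
        algebra_simps)
  have "(\<Sum>c\<in>RM 1 (Suc m). (correlation (2 ^ Suc m) h c)\<^sup>2)
      = (\<Sum>u\<in>RM 1 m. \<Sum>v\<in>RM 0 m. (correlation (?n + ?n) h (u @ vadd u v))\<^sup>2)"
    unfolding RM1_Suc power_Suc mult_2 by (rule sum_plotkin; erule length_RM)
  also have "\<dots> = (\<Sum>u\<in>RM 1 m. 2 * (correlation ?n h u)\<^sup>2 + 2 * (correlation ?n ?h' u)\<^sup>2)"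
    using split by (rule sum.cong[OF refl])
  also have "\<dots> = 2 * (\<Sum>u\<in>RM 1 m. (correlation ?n h u)\<^sup>2) + 2 * (\<Sum>u\<in>RM 1 m. (correlation ?n ?h' u)\<^sup>2)"
    by (simp add: sum.distrib sum_distrib_left)
  also have "\<dots> = 2 ^ (Suc m + 1) * ((\<Sum>j<?n. (h j)\<^sup>2) + (\<Sum>j<?n. (?h' j)\<^sup>2))"
    by (simp only: Suc.IH) (simp add: distrib_left)
  also have "\<dots> = 2 ^ (Suc m + 1) * (\<Sum>j<2 ^ Suc m. (h j)\<^sup>2)"
    by (simp only: power_Suc mult_2 sum_lessThan_add)
  finally show ?case .
qed

lemma vadd_ones_RM1:
  "c \<in> RM 1 m \<Longrightarrow> vadd c (replicate (2 ^ m) True) \<in> RM 1 m"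
proof (induction m arbitrary: c)
  case 0
  then show ?case unfolding RM1_0 by (auto simp: vadd_def)
next
  case (Suc m)
  let ?ones = "replicate (2 ^ m) True"
  from Suc.prems obtain u v where c: "c = u @ vadd u v" and u: "u \<in> RM 1 m" and v: "v \<in> RM 0 m"
    unfolding RM1_Suc plotkin_def by auto
  have len: "length u = 2 ^ m" "length v = 2 ^ m"
    using length_RM[OF u] length_RM[OF v] by simp_all
  have "vadd c (replicate (2 ^ Suc m) True) = vadd u ?ones @ vadd (vadd u ?ones) v"
    using len by (simp add: c mult_2 replicate_add vadd_append vadd_swap)
  moreover have "vadd u ?ones \<in> RM 1 m"
    using Suc.IH[OF u] .
  ultimately show ?case
    using v unfolding RM1_Suc plotkin_def by auto
qed

lemma RM1_correlation_ge_norm: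
  "\<exists>c\<in>RM 1 m. sqrt (\<Sum>j<2 ^ m. (h j)\<^sup>2) \<le> correlation (2 ^ m) h c"
proof -
  let ?s = "\<Sum>j<2 ^ m. (h j)\<^sup>2"
  have "\<exists>c\<in>RM 1 m. ?s \<le> (correlation (2 ^ m) h c)\<^sup>2"
  proof (rule ccontr)
    assume "\<not> ?thesis"
    then have "(\<Sum>c\<in>RM 1 m. (correlation (2 ^ m) h c)\<^sup>2) < (\<Sum>c\<in>RM 1 m. ?s)"
      using card_RM1[of m] by (intro sum_strict_mono finite_RM) (auto simp: not_le)
    then show False
      using sum_correlation_sq_RM1[of m h] card_RM1[of m] by simp
  qed
  then obtain c where c: "c \<in> RM 1 m" and "sqrt ?s \<le> \<bar>correlation (2 ^ m) h c\<bar>"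
    using real_sqrt_le_mono by fastforce
  moreover have "correlation (2 ^ m) h (vadd c (replicate (2 ^ m) True)) = - correlation (2 ^ m) h c"
    using c by (simp add: length_RM correlation_vadd_replicate bit_sign_def)
  ultimately show ?thesis
    using vadd_ones_RM1[OF c] by (cases "correlation (2 ^ m) h c \<ge> 0") force+
qed

lemma RM1_agreement_in_subset:
  assumes "S \<subseteq> {..<2 ^ m}"
  shows "\<exists>c\<in>RM 1 m. card S + sqrt (card S) \<le> 2 * card {j\<in>S. w ! j = c ! j}"
proof -
  define h where "h j = of_bool (j \<in> S) * bit_sign (w ! j)" for j
  have fin: "finite S"
    using assms finite_subset by blast
  have restrict: "(\<Sum>j<2 ^ m. of_bool (j \<in> S) * f j) = (\<Sum>j\<in>S. f j)" for f :: "nat \<Rightarrow> real"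
    using assms by (simp add: Int_absorb1 Int_absorb2)
  obtain c where c: "c \<in> RM 1 m" and ge: "sqrt (\<Sum>j<2 ^ m. (h j)\<^sup>2) \<le> correlation (2 ^ m) h c"
    using RM1_correlation_ge_norm by blast
  have "(h j)\<^sup>2 = of_bool (j \<in> S) * 1" for j
    by (simp add: h_def bit_sign_def)
  then have "(\<Sum>j<2 ^ m. (h j)\<^sup>2) = card S"
    using restrict[of "\<lambda>_. 1"] by simp
  moreover have "correlation (2 ^ m) h c = 2 * real (card {j\<in>S. w ! j = c ! j}) - card S"
  proof -
    have "bit_sign (w ! j) * bit_sign (c ! j) = 2 * of_bool (w ! j = c ! j) - 1" for j
      by (simp add: bit_sign_def)
    then have "correlation (2 ^ m) h c = (\<Sum>j\<in>S. 2 * of_bool (w ! j = c ! j) - 1)"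
      unfolding correlation_def h_def using restrict by (simp add: mult.assoc)
    also have "\<dots> = 2 * real (card {j\<in>S. w ! j = c ! j}) - card S"
      using fin by (simp add: sum_subtractf sum_distrib_left[symmetric] Int_def)
    finally show ?thesis .
  qed
  ultimately show ?thesis
    using c ge by (intro bexI[of _ c]) auto
qed

section \<open>Guaranteed agreement and the covering radius\<close>

definition agree_cols :: "nat \<Rightarrow> nat \<Rightarrow> (nat \<Rightarrow> bool list) \<Rightarrow> (nat \<Rightarrow> bool list) \<Rightarrow> nat set" where
  "agree_cols t n v c = {j. j < n \<and> (\<forall>i<t. v i ! j = c i ! j)}"

lemma card_agree_cols_le: "card (agree_cols t n v c) \<le> n"
  using card_mono[of "{..<n}" "agree_cols t n v c"] by (auto simp: agree_cols_def)

lemma agree_cols_Suc: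
  "agree_cols (Suc t) n v (c(t := d)) = {j \<in> agree_cols t n v c. v t ! j = d ! j}"
  by (auto simp: agree_cols_def less_Suc_eq)

lemma agree_cols_vadd:
  assumes "\<forall>i<t. length (w i) = n \<and> length (a i) = n \<and> length (b i) = n"
  shows "agree_cols t n w (\<lambda>i. vadd (a i) (b i)) = agree_cols t n (\<lambda>i. vadd (w i) (a i)) b"
  using assms by (auto simp: agree_cols_def)

lemma card_agree_cols_append:
  assumes "\<forall>i<t. v i = L i @ R i \<and> c i = a i @ d i \<and> length (L i) = n \<and> length (a i) = n"
  shows "card (agree_cols t (n + n) v c) = card (agree_cols t n L a) + card (agree_cols t n R d)"
proof -
  have "agree_cols t (n + n) v c = agree_cols t n L a \<union> (\<lambda>k. k + n) ` agree_cols t n R d"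
  proof (intro set_eqI)
    fix j
    show "j \<in> agree_cols t (n + n) v c \<longleftrightarrow> j \<in> agree_cols t n L a \<union> (\<lambda>k. k + n) ` agree_cols t n R d"
    proof (cases "j < n")
      case True
      then show ?thesis using assms by (auto simp: agree_cols_def nth_append)
    next
      case False
      then obtain k where "j = k + n" by (metis add.commute le_Suc_ex not_less)
      then show ?thesis using assms by (auto simp: agree_cols_def nth_append)
    qed
  qed
  moreover have "agree_cols t n L a \<inter> (\<lambda>k. k + n) ` agree_cols t n R d = {}"
    by (auto simp: agree_cols_def)
  ultimately show ?thesis
    by (simp add: card_Un_disjoint card_image agree_cols_def)
qed

definition guaranteed_agreement :: "nat \<Rightarrow> nat \<Rightarrow> bool list set \<Rightarrow> real \<Rightarrow> bool" where
  "guaranteed_agreement t n C A \<longleftrightarrow>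
     (\<forall>v. is_mat t n v \<longrightarrow> (\<exists>c. (\<forall>i<t. c i \<in> C) \<and> A \<le> card (agree_cols t n v c)))"

lemma guaranteed_agreement_mono:
  "guaranteed_agreement t n C B \<Longrightarrow> A \<le> B \<Longrightarrow> guaranteed_agreement t n C A"
  unfolding guaranteed_agreement_def by (meson order_trans)

lemma guaranteed_agreement_full: "guaranteed_agreement t n {v. length v = n} n"
proof -
  have all: "agree_cols t n v v = {..<n}" for v
    by (auto simp: agree_cols_def)
  show ?thesis
    unfolding guaranteed_agreement_def
  proof (intro allI impI)
    fix v assume "is_mat t n v"
    then show "\<exists>c. (\<forall>i<t. c i \<in> {v. length v = n}) \<and> real n \<le> card (agree_cols t n v c)"
      using all by (intro exI[of _ v]) (simp add: is_mat_def)
  qed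
qed

lemma guaranteed_agreement_plotkin:
  assumes U: "\<And>u. u \<in> U \<Longrightarrow> length u = n" and V: "\<And>v. v \<in> V \<Longrightarrow> length v = n"
    and agree_U: "guaranteed_agreement t n U A" and agree_V: "guaranteed_agreement t n V B"
  shows "guaranteed_agreement t (n + n) (plotkin U V) (A + B)"
  unfolding guaranteed_agreement_def
proof (intro allI impI)
  fix v assume "is_mat t (n + n) v"
  then have len_v: "\<forall>i<t. length (v i) = n + n"
    by (simp add: is_mat_def)
  define L where "L i = take n (v i)" for i
  define R where "R i = drop n (v i)" for i
  have "is_mat t n L"
    using len_v by (simp add: is_mat_def L_def)
  then obtain a where a: "\<forall>i<t. a i \<in> U" and A: "A \<le> card (agree_cols t n L a)"
    using agree_U unfolding guaranteed_agreement_def by blast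
  \<comment> \<open>the right halves R are matched by a + b iff b matches R + a\<close>
  have "is_mat t n (\<lambda>i. vadd (R i) (a i))"
    using len_v a U by (simp add: is_mat_def R_def)
  then obtain b where b: "\<forall>i<t. b i \<in> V" and B: "B \<le> card (agree_cols t n (\<lambda>i. vadd (R i) (a i)) b)"
    using agree_V unfolding guaranteed_agreement_def by blast
  define c where "c i = a i @ vadd (a i) (b i)" for i
  have "\<forall>i<t. c i \<in> plotkin U V"
    using a b by (auto simp: c_def plotkin_def)
  moreover have "card (agree_cols t (n + n) v c)
      = card (agree_cols t n L a) + card (agree_cols t n (\<lambda>i. vadd (R i) (a i)) b)"
  proof -
    have "card (agree_cols t (n + n) v c)
        = card (agree_cols t n L a) + card (agree_cols t n R (\<lambda>i. vadd (a i) (b i)))"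
      using len_v a U by (intro card_agree_cols_append) (simp add: L_def R_def c_def)
    also have "agree_cols t n R (\<lambda>i. vadd (a i) (b i)) = agree_cols t n (\<lambda>i. vadd (R i) (a i)) b"
      using len_v a b U V by (intro agree_cols_vadd) (simp add: R_def)
    finally show ?thesis .
  qed
  ultimately show "\<exists>c. (\<forall>i<t. c i \<in> plotkin U V) \<and> A + B \<le> card (agree_cols t (n + n) v c)"
    using A B by auto
qed

lemma dist_t_add_card_agree_cols:
  assumes "is_mat t n v" and "\<forall>i<t. length (c i) = n"
  shows "dist_t t n v c + card (agree_cols t n v c) = n"
proof -
  have "{j. j < n \<and> (\<exists>i<t. vadd (v i) (c i) ! j)} = {..<n} - agree_cols t n v c"
    using assms by (auto simp: agree_cols_def is_mat_def)
  moreover have "agree_cols t n v c \<subseteq> {..<n}"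
    by (auto simp: agree_cols_def)
  ultimately show ?thesis
    using card_agree_cols_le[of t n v c]
    by (simp add: dist_t_def wt_t_def card_Diff_subset finite_subset)
qed

lemma cov_rad_t_le:
  assumes agree: "guaranteed_agreement t n C A" and len: "\<forall>c\<in>C. length c = n"
  shows "real (cov_rad_t t n C) \<le> n - A"
proof -
  have "is_mat t n (\<lambda>_. replicate n False)"
    by (simp add: is_mat_def)
  then have "A \<le> n"
    using agree card_agree_cols_le unfolding guaranteed_agreement_def by (meson of_nat_le_iff order_trans)
  have "\<exists>c. (\<forall>i<t. c i \<in> C) \<and> dist_t t n v c \<le> nat \<lfloor>n - A\<rfloor>" if v: "is_mat t n v" for v
  proof -
    obtain c where c: "\<forall>i<t. c i \<in> C" and A: "A \<le> card (agree_cols t n v c)"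
      using agree v unfolding guaranteed_agreement_def by blast
    have "dist_t t n v c + card (agree_cols t n v c) = n"
      using v c len by (intro dist_t_add_card_agree_cols) auto
    with A have "dist_t t n v c \<le> \<lfloor>n - A\<rfloor>"
      by (simp add: le_floor_iff)
    with c show ?thesis
      by auto
  qed
  then have "cov_rad_t t n C \<le> nat \<lfloor>n - A\<rfloor>"
    unfolding cov_rad_t_def by (intro Least_le) blast
  then show ?thesis
    using \<open>A \<le> n\<close> of_int_floor_le[of "n - A"] by linarith
qed

section \<open>The first-order code: greedy choice of the rows\<close>

definition greedy_bound :: "nat \<Rightarrow> nat \<Rightarrow> real" where
  "greedy_bound m k = 2 ^ m / 2 ^ k + sqrt (2 ^ m / 2) * sqrt (2 ^ k - 1) / 2 ^ k"

lemma greedy_bound_Suc: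
  assumes x: "greedy_bound m k \<le> x"
  shows "greedy_bound m (Suc k) \<le> (x + sqrt x) / 2"
proof -
  define p :: real where "p = 2 ^ k"
  define a where "a = sqrt (2 ^ m / 2)"
  have p: "p \<ge> 1" and a: "a \<ge> 0"
    by (simp_all add: p_def a_def)
  have G: "greedy_bound m k = 2 ^ m / p + a * sqrt (p - 1) / p"
    "greedy_bound m (Suc k) = 2 ^ m / (2 * p) + a * sqrt (2 * p - 1) / (2 * p)"
    by (simp_all add: greedy_bound_def p_def a_def)
  have "0 \<le> a * sqrt (p - 1) / p"
    using a p by simp
  then have "2 ^ m / p \<le> x"
    using x unfolding G by linarith
  moreover have "sqrt (2 ^ m / p) = a * sqrt (2 * p) / p"
  proof (rule real_sqrt_unique)
    show "(a * sqrt (2 * p) / p)\<^sup>2 = 2 ^ m / p"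
      using p by (simp add: a_def power_divide power_mult_distrib power2_eq_square field_simps)
  qed (use a p in simp)
  ultimately have sqrt_x: "a * sqrt (2 * p) / p \<le> sqrt x"
    by (metis real_sqrt_le_mono)
  have "sqrt (2 * p - 1) \<le> sqrt (p - 1) + sqrt (2 * p)"
    using p by (simp add: add_increasing)
  then have "a * sqrt (2 * p - 1) / (2 * p) \<le> a * (sqrt (p - 1) + sqrt (2 * p)) / (2 * p)"
    using a p by (intro divide_right_mono mult_left_mono) simp_all
  moreover have "(greedy_bound m k + a * sqrt (2 * p) / p) / 2
      = 2 ^ m / (2 * p) + a * (sqrt (p - 1) + sqrt (2 * p)) / (2 * p)"
    unfolding G using p by (simp add: field_simps)
  ultimately have "greedy_bound m (Suc k) \<le> (greedy_bound m k + a * sqrt (2 * p) / p) / 2"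
    unfolding G by linarith
  also have "\<dots> \<le> (x + sqrt x) / 2"
    using x sqrt_x by (intro divide_right_mono add_mono) simp_all
  finally show ?thesis .
qed

lemma RM1_greedy_agreement:
  "\<exists>c. (\<forall>i<k. c i \<in> RM 1 m) \<and> greedy_bound m k \<le> card (agree_cols k (2 ^ m) v c)"
proof (induction k)
  case 0
  have "agree_cols 0 (2 ^ m) v c = {..<2 ^ m}" for c
    by (auto simp: agree_cols_def)
  then show ?case
    by (simp add: greedy_bound_def)
next
  case (Suc k)
  then obtain c where c: "\<forall>i<k. c i \<in> RM 1 m" and G: "greedy_bound m k \<le> card (agree_cols k (2 ^ m) v c)"
    by blast
  let ?S = "agree_cols k (2 ^ m) v c"
  obtain d where d: "d \<in> RM 1 m" and S: "card ?S + sqrt (card ?S) \<le> 2 * card {j\<in>?S. v k ! j = d ! j}"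
    using RM1_agreement_in_subset[of ?S m "v k"] by (auto simp: agree_cols_def)
  have "greedy_bound m (Suc k) \<le> card (agree_cols (Suc k) (2 ^ m) v (c(k := d)))"
    using greedy_bound_Suc[OF G] S by (simp add: agree_cols_Suc)
  moreover have "\<forall>i<Suc k. (c(k := d)) i \<in> RM 1 m"
    using c d by (simp add: less_Suc_eq)
  ultimately show ?case
    by blast
qed

lemma guaranteed_agreement_RM1: "guaranteed_agreement t (2 ^ m) (RM 1 m) (greedy_bound m t)"
  unfolding guaranteed_agreement_def using RM1_greedy_agreement by blast

section \<open>Solving the Plotkin recursion\<close>

definition RM_lead :: "nat \<Rightarrow> nat \<Rightarrow> real" where
  "RM_lead r m = (1 + sqrt 2) ^ (r - 1) * sqrt (2 ^ m / 2)"

definition RM_defect :: "nat \<Rightarrow> nat \<Rightarrow> real" where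
  "RM_defect r m = (\<Sum>j\<in>{2..r}. real ((m - j) choose (r - j)) * (2 + sqrt 2) ^ (j - 1))"

definition RM_agreement :: "nat \<Rightarrow> nat \<Rightarrow> nat \<Rightarrow> real" where
  "RM_agreement t r m = 2 ^ m / 2 ^ t + sqrt (2 ^ t - 1) / 2 ^ t * (RM_lead r m - RM_defect r m)"

lemma RM_lead_Suc:
  assumes "2 \<le> r"
  shows "RM_lead r (Suc m) = RM_lead r m + RM_lead (r - 1) m"
proof -
  obtain k where r: "r = Suc (Suc k)"
    using assms by (metis add_2_eq_Suc le_Suc_ex)
  have "sqrt (2 ^ Suc m / 2) = sqrt 2 * sqrt (2 ^ m / 2)"
    by (simp add: real_sqrt_mult[symmetric])
  moreover have "(1 + sqrt 2) * sqrt 2 = (1 + sqrt 2) + 1"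
    by (simp add: algebra_simps)
  ultimately show ?thesis
    unfolding RM_lead_def r by (simp add: algebra_simps)
qed

lemma RM_defect_Suc:
  assumes "2 \<le> r" and "r \<le> m"
  shows "RM_defect r (Suc m) = RM_defect r m + RM_defect (r - 1) m"
proof -
  obtain k where r: "r = Suc k" and k: "1 \<le> k"
    using assms by (cases r) auto
  let ?q = "2 + sqrt 2 :: real"
  have top: "RM_defect (Suc k) n = (\<Sum>j\<in>{2..k}. real ((n - j) choose (Suc k - j)) * ?q ^ (j - 1)) + ?q ^ k"
    for n
    unfolding RM_defect_def using k by (simp add: sum.cl_ivl_Suc)
  have pascal: "real ((Suc m - j) choose (Suc k - j))
      = real ((m - j) choose (Suc k - j)) + real ((m - j) choose (k - j))" if "j \<in> {2..k}" for j
  proof -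
    have "Suc m - j = Suc (m - j)" "Suc k - j = Suc (k - j)"
      using that assms r by auto
    then show ?thesis by simp
  qed
  have "(\<Sum>j\<in>{2..k}. real ((Suc m - j) choose (Suc k - j)) * ?q ^ (j - 1))
      = (\<Sum>j\<in>{2..k}. real ((m - j) choose (Suc k - j)) * ?q ^ (j - 1))
        + (\<Sum>j\<in>{2..k}. real ((m - j) choose (k - j)) * ?q ^ (j - 1))"
    unfolding sum.distrib[symmetric] by (rule sum.cong[OF refl]) (simp add: pascal distrib_right)
  then show ?thesis
    unfolding r top by (simp add: RM_defect_def)
qed

lemma RM_lead_diag: "1 \<le> m \<Longrightarrow> RM_lead m m = (2 + sqrt 2) ^ (m - 1)"
proof -
  assume "1 \<le> m"
  then have "sqrt (2 ^ m / 2) = sqrt 2 ^ (m - 1)"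
    by (cases m) (simp_all add: real_sqrt_power)
  then show ?thesis
    unfolding RM_lead_def by (simp add: power_mult_distrib[symmetric] algebra_simps)
qed

lemma RM_defect_diag_ge: "2 \<le> m \<Longrightarrow> (2 + sqrt 2) ^ (m - 1) \<le> RM_defect m m"
proof -
  assume "2 \<le> m"
  have "(2 + sqrt 2) ^ (m - 1) = real ((m - m) choose (m - m)) * (2 + sqrt 2) ^ (m - 1)"
    by simp
  also have "\<dots> \<le> RM_defect m m"
    unfolding RM_defect_def using \<open>2 \<le> m\<close> by (intro member_le_sum) auto
  finally show ?thesis .
qed

lemma RM_agreement_1: "RM_agreement t 1 m = greedy_bound m t"
  by (simp add: RM_agreement_def RM_lead_def RM_defect_def greedy_bound_def)

lemma RM_agreement_diag_le: "2 \<le> m \<Longrightarrow> RM_agreement t m m \<le> 2 ^ m"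
proof -
  assume "2 \<le> m"
  then have "RM_lead m m - RM_defect m m \<le> 0"
    using RM_lead_diag RM_defect_diag_ge by simp
  then have "sqrt (2 ^ t - 1) / 2 ^ t * (RM_lead m m - RM_defect m m) \<le> 0"
    by (intro mult_nonneg_nonpos) simp_all
  moreover have "(2::real) ^ m / 2 ^ t \<le> 2 ^ m"
    by (simp add: divide_le_eq)
  ultimately show ?thesis
    unfolding RM_agreement_def by linarith
qed

lemma RM_agreement_Suc:
  assumes "2 \<le> r" and "r \<le> m"
  shows "RM_agreement t r (Suc m) = RM_agreement t r m + RM_agreement t (r - 1) m"
proof -
  define s :: real where "s = sqrt (2 ^ t - 1) / 2 ^ t"
  have unfold: "RM_agreement t r' m' = 2 ^ m' / 2 ^ t + s * (RM_lead r' m' - RM_defect r' m')" for r' m'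
    by (simp add: RM_agreement_def s_def)
  have "(2::real) ^ Suc m / 2 ^ t = 2 ^ m / 2 ^ t + 2 ^ m / 2 ^ t"
    by simp
  then show ?thesis
    unfolding unfold RM_lead_Suc[OF assms(1)] RM_defect_Suc[OF assms] by (simp add: algebra_simps)
qed

theorem guaranteed_agreement_RM:
  "1 \<le> r \<Longrightarrow> r \<le> m \<Longrightarrow> guaranteed_agreement t (2 ^ m) (RM r m) (RM_agreement t r m)"
proof (induction m arbitrary: r)
  case 0
  then show ?case by simp
next
  case (Suc m)
  consider "r = 1" | "r = Suc m" "2 \<le> r" | "2 \<le> r" "r \<le> m"
    using Suc.prems by linarith
  then show ?case
  proof cases
    case 1
    show ?thesis
      unfolding 1 RM_agreement_1 by (rule guaranteed_agreement_RM1)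
  next
    case 2
    show ?thesis
    proof (rule guaranteed_agreement_mono)
      have "RM r (Suc m) = {v. length v = 2 ^ Suc m}"
        using 2 by (intro RM_full) simp_all
      then show "guaranteed_agreement t (2 ^ Suc m) (RM r (Suc m)) (real (2 ^ Suc m))"
        by (simp only: guaranteed_agreement_full)
      show "RM_agreement t r (Suc m) \<le> real (2 ^ Suc m)"
        using 2 RM_agreement_diag_le[of r t] by simp
    qed
  next
    case 3
    have "guaranteed_agreement t (2 ^ m + 2 ^ m) (plotkin (RM r m) (RM (r - 1) m))
        (RM_agreement t r m + RM_agreement t (r - 1) m)"
      using 3 Suc.IH by (intro guaranteed_agreement_plotkin) (auto simp: length_RM)
    then show ?thesis
      using 3 RM_plotkin[of r "Suc m"] by (simp add: RM_agreement_Suc mult_2)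
  qed
qed

section \<open>Estimating the defect term\<close>

lemma binomial_mult_le_Suc:
  fixes q :: real
  assumes "q * (real b + 1) \<le> real a + 1"
  shows "real (a choose b) * q \<le> real (Suc a choose Suc b)"
proof -
  have "real (a choose b) * q * (real b + 1) = real (a choose b) * (q * (real b + 1))"
    by (simp only: mult.assoc)
  also have "\<dots> \<le> real (a choose b) * (real a + 1)"
    using assms by (rule mult_left_mono) simp
  also have "\<dots> = real (Suc a choose Suc b) * (real b + 1)"
    using Suc_times_binomial_eq[of a b] by (simp add: algebra_simps flip: of_nat_mult)
  finally show ?thesis
    by (simp add: mult_le_cancel_right_pos)
qed

lemma binomial_diff_mult_power_le:
  fixes q :: real
  assumes q: "1 \<le> q" and rq: "r * q \<le> m"
  shows "j \<le> r \<Longrightarrow> real ((m - j) choose (r - j)) * q ^ j \<le> real (m choose r)"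
proof (induction j)
  case 0
  then show ?case by simp
next
  case (Suc j)
  have "real r \<le> r * q"
    using q by (simp add: mult_le_cancel_left1)
  with rq have "r \<le> m"
    by linarith
  then have ind: "m - j = Suc (m - Suc j)" "r - j = Suc (r - Suc j)"
    using Suc.prems by auto
  have "q * (real (r - Suc j) + 1) \<le> real (m - Suc j) + 1"
  proof -
    have "real j \<le> q * j"
      using q by (simp add: mult_le_cancel_right1)
    with rq have "q * (real r - j) \<le> real m - j"
      by (simp add: right_diff_distrib mult.commute)
    then show ?thesis
      using Suc.prems \<open>r \<le> m\<close> by (simp add: of_nat_diff)
  qed
  then have "real ((m - Suc j) choose (r - Suc j)) * q \<le> real ((m - j) choose (r - j))"
    unfolding ind by (rule binomial_mult_le_Suc)
  then have "real ((m - Suc j) choose (r - Suc j)) * q ^ Suc j \<le> real ((m - j) choose (r - j)) * q ^ j"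
    using q by (simp add: mult.assoc mult.left_commute[of q] mult_right_mono)
  also have "\<dots> \<le> real (m choose r)"
    using Suc by simp
  finally show ?case .
qed

lemma RM_defect_le:
  assumes r: "2 \<le> r" and rq: "r * (2 + sqrt 2) \<le> m"
  shows "RM_defect r m \<le> r * real (m choose r) / root 4 2"
proof -
  let ?q = "2 + sqrt 2 :: real"
  have q: "1 \<le> ?q" and q0: "0 < ?q"
    by (simp_all add: add_pos_nonneg)
  have "real ((m - j) choose (r - j)) * ?q ^ (j - 1) \<le> real (m choose r) / ?q" if "j \<in> {2..r}" for j
  proof -
    have "real ((m - j) choose (r - j)) * ?q ^ (j - 1) * ?q = real ((m - j) choose (r - j)) * ?q ^ j"
      using that by (simp add: mult.assoc power_eq_if)
    also have "\<dots> \<le> real (m choose r)"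
      using that by (intro binomial_diff_mult_power_le[OF q rq]) simp
    finally show ?thesis
      using q0 by (simp add: pos_le_divide_eq)
  qed
  then have "RM_defect r m \<le> (\<Sum>j\<in>{2..r}. real (m choose r) / ?q)"
    unfolding RM_defect_def by (rule sum_mono)
  also have "\<dots> = (r - 1) * real (m choose r) / ?q"
    using r by (simp add: of_nat_diff)
  also have "\<dots> \<le> r * real (m choose r) / root 4 2"
  proof (rule frac_le)
    have "root 4 2 \<le> root 4 (2 ^ 4)"
      by (rule real_root_le_mono) simp_all
    then show "root 4 2 \<le> ?q"
      by (simp add: real_root_power_cancel) (smt (verit) real_sqrt_ge_zero)
  qed (simp_all add: mult_right_mono)
  finally show ?thesis .
qed

lemma sqrt_power2_half: "1 \<le> m \<Longrightarrow> sqrt (2 ^ m / 2) = 2 powr ((real m - 1) / 2)"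
proof -
  assume "1 \<le> m"
  then have "(2::real) ^ m / 2 = 2 powr (real m - 1)"
    by (simp add: powr_diff powr_realpow)
  then show ?thesis
    by (simp add: powr_half_sqrt[symmetric] powr_powr)
qed

theorem lemma20:
  fixes m t r :: nat
  assumes "m \<ge> 3" and "2 \<le> r" and "real r \<le> real m / (2 + sqrt 2)"
  shows "real (R_RM t r m) \<le>
      (1 - 1 / 2^t) * 2^m
      - sqrt (2^t - 1) / 2^t * (1 + sqrt 2)^(r - 1) * 2 powr ((real m - 1) / 2)
      + sqrt (2^t - 1) / (2^t * root 4 2) * real r * real (m choose r)"
proof -
  let ?s = "sqrt (2 ^ t - 1) / 2 ^ t :: real"
  have rq: "r * (2 + sqrt 2) \<le> m"
    using assms(3) by (simp add: le_divide_eq add_pos_nonneg)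
  moreover have "real r \<le> r * (2 + sqrt 2)"
    by (simp add: mult_le_cancel_left1)
  ultimately have "r \<le> m"
    by linarith
  have "real (R_RM t r m) \<le> 2 ^ m - RM_agreement t r m"
    unfolding R_RM_def using cov_rad_t_le[OF guaranteed_agreement_RM] length_RM assms(2) \<open>r \<le> m\<close>
    by simp
  also have "\<dots> = (1 - 1 / 2 ^ t) * 2 ^ m - ?s * RM_lead r m + ?s * RM_defect r m"
    by (simp add: RM_agreement_def field_simps)
  also have "\<dots> \<le> (1 - 1 / 2 ^ t) * 2 ^ m - ?s * RM_lead r m + ?s * (r * real (m choose r) / root 4 2)"
    using RM_defect_le[OF assms(2) rq] by (intro add_left_mono mult_left_mono) simp_all
  also have "?s * RM_lead r m = sqrt (2^t - 1) / 2^t * (1 + sqrt 2)^(r - 1) * 2 powr ((real m - 1) / 2)"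
    using assms(1) by (simp add: RM_lead_def sqrt_power2_half)
  also have "?s * (r * real (m choose r) / root 4 2)
      = sqrt (2^t - 1) / (2^t * root 4 2) * real r * real (m choose r)"
    by simp
  finally show ?thesis .
qed

end
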